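(* Let $\mathcal{H}_{DFdB}$ be the Dynkin–Faà di Bruno Hopf algebra with antipode $S$. For $n\ge1$ let $A_n$ be the $n\times n$ matrix with entries $(A_n)_{ij}=B_{n-i+2,\,n-j+1}(X_0,X_1,X_2,\dots)$, $1\le i,j\le n$ (so subdiagonal entries equal $1$ and entries below the subdiagonal equal $0$). Then $$S(X_n)=-\,\big|A_n\big|_{1n},$$ the negative of the quasideterminant of $A_n$ computed at the top right entry.
   Context: Noncommutative Bell polynomials: in the free associative algebra on letters $d_1,d_2,\dots$ with the derivation $\partial$ determined by $\partial(d_i)=d_{i+1}$ and the Leibniz rule, set $B_0=1$ and $B_n=d_1B_{n-1}+\partial(B_{n-1})$. Grading words by $|d_{j_1}\cdots d_{j_k}|=j_1+\dots+j_k$, $B_n$ is homogeneous of degree $n$; the partial Bell polynomial $B_{n,k}$ is the sum of the terms of $B_n$ consisting of words with exactly $k$ letters ($B_{n,k}=0$ if $k>n$, $B_{n,n}=d_1^n$). $B_{n,k}(X_0,X_1,X_2,\dots)$ denotes the result of substituting $d_i\mapsto X_{i-1}$. The Dynkin–Faà di Bruno Hopf algebra is the free associative algebra $\mathbb{K}\langle X_1,X_2,\dots\rangle$ with unit $X_0=1$, graded by $|X_n|=n$, with algebra-morphism coproduct $\Delta(X_n)=\sum_{k=0}^nB_{n+1,k+1}(X_0,X_1,\dots,X_n)\otimes X_k$ and counit $\epsilon(X_n)=\delta_{n,0}$; it is graded connected, hence has an antipode. Quasideterminant: for an $n\times n$ matrix $A=(a_{ij})$ over a noncommutative ring, with $A^{pq}$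 the matrix with row $p$ and column $q$ deleted (original indices kept), $|A|_{11}=a_{11}$ if $n=1$ and $|A|_{pq}=a_{pq}-\sum_{i\ne p,j\ne q}a_{pj}(|A^{pq}|_{ij})^{-1}a_{iq}$; for $A$ with $a_{i+1,i}=-1$, $a_{ij}=0$ for $i>j+1$, this equals $a_{1n}+\sum_{k\ge1}\sum_{1\le j_1<\cdots<j_k<n}a_{1j_1}a_{j_1+1,j_2}\cdots a_{j_k+1,n}$, and $|-A|_{1n}=-|A|_{1n}$. *)

theory Defs
  imports "HOL-Library.Poly_Mapping"
begin

text \<open>Elements of the free associative algebra over 'k on letters indexed by nat:
  finitely supported functions from words (nat lists) to coefficients.
  For the Dynkin--Faa di Bruno algebra, letter i stands for the generator X_(i+1)
  (so X_0 = 1 is the empty word).  For Bell polynomials, letter i stands for d_(i+1).\<close>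

type_synonym 'k fa = "nat list \<Rightarrow>\<^sub>0 'k"
type_synonym 'k fa2 = "(nat list \<times> nat list) \<Rightarrow>\<^sub>0 'k"  \<comment> \<open>tensor square\<close>

definition fa_one :: "'k::field fa" where
  "fa_one = Poly_Mapping.single [] 1"

definition fa_smult :: "'k::field \<Rightarrow> 'k fa \<Rightarrow> 'k fa" where
  "fa_smult c p = Poly_Mapping.map (\<lambda>x. c * x) p"

definition fa_mult :: "'k::field fa \<Rightarrow> 'k fa \<Rightarrow> 'k fa" where
  "fa_mult p q = (\<Sum>u\<in>Poly_Mapping.keys p. \<Sum>v\<in>Poly_Mapping.keys q.
      Poly_Mapping.single (u @ v) (Poly_Mapping.lookup p u * Poly_Mapping.lookup q v))"

definition t_smult :: "'k::field \<Rightarrow> 'k fa2 \<Rightarrow> 'k fa2" where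
  "t_smult c t = Poly_Mapping.map (\<lambda>x. c * x) t"

definition t_mult :: "'k::field fa2 \<Rightarrow> 'k fa2 \<Rightarrow> 'k fa2" where
  "t_mult s t = (\<Sum>a\<in>Poly_Mapping.keys s. \<Sum>b\<in>Poly_Mapping.keys t.
      Poly_Mapping.single (fst a @ fst b, snd a @ snd b) (Poly_Mapping.lookup s a * Poly_Mapping.lookup t b))"

definition tensor :: "'k::field fa \<Rightarrow> 'k fa \<Rightarrow> 'k fa2" where
  "tensor p q = (\<Sum>u\<in>Poly_Mapping.keys p. \<Sum>v\<in>Poly_Mapping.keys q.
      Poly_Mapping.single (u, v) (Poly_Mapping.lookup p u * Poly_Mapping.lookup q v))"

text \<open>Derivation with d_i \<mapsto> d_(i+1), i.e. letter m \<mapsto> letter m+1, with Leibniz rule.\<close>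
definition bell_deriv :: "'k::field fa \<Rightarrow> 'k fa" where
  "bell_deriv p = (\<Sum>u\<in>Poly_Mapping.keys p. \<Sum>i<length u.
      Poly_Mapping.single (u[i := Suc (u ! i)]) (Poly_Mapping.lookup p u))"

fun Bell :: "nat \<Rightarrow> 'k::field fa" where
  "Bell 0 = fa_one"
| "Bell (Suc n) = fa_mult (Poly_Mapping.single [0] 1) (Bell n :: 'k fa) + bell_deriv (Bell n :: 'k fa)"

definition Bell_part :: "nat \<Rightarrow> nat \<Rightarrow> 'k::field fa" where
  "Bell_part n k = (\<Sum>u\<in>{u\<in>Poly_Mapping.keys (Bell n :: 'k fa). length u = k}.
      Poly_Mapping.single u (Poly_Mapping.lookup (Bell n :: 'k fa) u))"

text \<open>Substitution d_i \<mapsto> X_(i-1): the Bell letter m (= d_(m+1)) goes to X_m,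
  i.e. letter 0 goes to X_0 = 1 (deleted) and letter m \<ge> 1 goes to the algebra letter m-1.\<close>
definition subst_word :: "nat list \<Rightarrow> nat list" where
  "subst_word w = map (\<lambda>m. m - 1) (filter (\<lambda>m. m \<noteq> 0) w)"

definition evalX :: "'k::field fa \<Rightarrow> 'k fa" where
  "evalX p = (\<Sum>u\<in>Poly_Mapping.keys p. Poly_Mapping.single (subst_word u) (Poly_Mapping.lookup p u))"

definition X :: "nat \<Rightarrow> 'k::field fa" where
  "X n = (if n = 0 then fa_one else Poly_Mapping.single [n - 1] 1)"

definition DeltaX :: "nat \<Rightarrow> 'k::field fa2" where
  "DeltaX n = (\<Sum>k\<in>{0..n}. tensor (evalX (Bell_part (n + 1) (k + 1))) (X k))"

fun Delta_word :: "nat list \<Rightarrow> 'k::field fa2" where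
  "Delta_word [] = Poly_Mapping.single ([], []) 1"
| "Delta_word (a # w) = t_mult (DeltaX (Suc a)) (Delta_word w)"

definition Delta :: "'k::field fa \<Rightarrow> 'k fa2" where
  "Delta p = (\<Sum>u\<in>Poly_Mapping.keys p. t_smult (Poly_Mapping.lookup p u) (Delta_word u))"

definition counit :: "'k::field fa \<Rightarrow> 'k" where
  "counit p = Poly_Mapping.lookup p []"

definition mult_S_id :: "('k::field fa \<Rightarrow> 'k fa) \<Rightarrow> 'k fa2 \<Rightarrow> 'k fa" where
  "mult_S_id S t = (\<Sum>a\<in>Poly_Mapping.keys t. fa_smult (Poly_Mapping.lookup t a)
      (fa_mult (S (Poly_Mapping.single (fst a) 1)) (Poly_Mapping.single (snd a) 1)))"

definition mult_id_S :: "('k::field fa \<Rightarrow> 'k fa) \<Rightarrow> 'k fa2 \<Rightarrow> 'k fa" where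
  "mult_id_S S t = (\<Sum>a\<in>Poly_Mapping.keys t. fa_smult (Poly_Mapping.lookup t a)
      (fa_mult (Poly_Mapping.single (fst a) 1) (S (Poly_Mapping.single (snd a) 1))))"

definition is_antipode :: "('k::field fa \<Rightarrow> 'k fa) \<Rightarrow> bool" where
  "is_antipode S \<longleftrightarrow>
     (\<forall>p q. S (p + q) = S p + S q) \<and>
     (\<forall>c p. S (fa_smult c p) = fa_smult c (S p)) \<and>
     (\<forall>p. mult_S_id S (Delta p) = fa_smult (counit p) fa_one) \<and>
     (\<forall>p. mult_id_S S (Delta p) = fa_smult (counit p) fa_one)"

fun chain_prod :: "(nat \<Rightarrow> nat \<Rightarrow> 'k::field fa) \<Rightarrow> nat list \<Rightarrow> 'k fa" where
  "chain_prod a (p # q # rest) = fa_mult (a (p + 1) q) (chain_prod a (q # rest))"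
| "chain_prod a _ = fa_one"

text \<open>For an n\<times>n matrix with a_(i+1,i) = -1 and zeros below: |A|_(1n) =
  a_(1n) + \<Sum>_(k\<ge>1) \<Sum>_(1\<le>j_1<...<j_k<n) a_(1 j_1) a_(j_1+1, j_2) ... a_(j_k+1, n).\<close>
definition qdet_hess :: "nat \<Rightarrow> (nat \<Rightarrow> nat \<Rightarrow> 'k::field fa) \<Rightarrow> 'k fa" where
  "qdet_hess n a = (\<Sum>J\<in>Pow {1..<n}. chain_prod a (0 # sorted_list_of_set J @ [n]))"

text \<open>Quasideterminant |A|_(1n) of a matrix with subdiagonal entries +1 and zeros below,
  via |A|_(1n) = -|-A|_(1n).\<close>
definition qdet_top_right :: "nat \<Rightarrow> (nat \<Rightarrow> nat \<Rightarrow> 'k::field fa) \<Rightarrow> 'k fa" where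
  "qdet_top_right n A = - qdet_hess n (\<lambda>i j. - A i j)"

definition A_mat :: "nat \<Rightarrow> nat \<Rightarrow> nat \<Rightarrow> 'k::field fa" where
  "A_mat n i j = evalX (Bell_part (n - i + 2) (n - j + 1))"

end

theory Submission
  imports Defs
begin

text \<open>The counit identity m(id \<otimes> S)\<Delta>(X_r) = \<epsilon>(X_r) = 0 reads
  \<Sum>_(k\<le>r) B_(r+1,k+1) S(X_k) = 0, and since B_(r+1,r+1) = d_1^(r+1) evaluates to 1, it is a
  unitriangular recursion for S(X_r).  Expanding the quasideterminant of the almost upper
  triangular matrix along the first breakpoint of its chains gives the same recursion for the
  partial chain sums starting at row n - r + 1, whose entries are B_(r+1,k+1); strong
  induction on r identifies the two.\<close>

lemma lookup_fa_smult [simp]: "Poly_Mapping.lookup (fa_smult c p) w = c * Poly_Mapping.lookup p w"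
  unfolding fa_smult_def by (simp add: map.rep_eq when_def)

lemma lookup_t_smult [simp]: "Poly_Mapping.lookup (t_smult c p) w = c * Poly_Mapping.lookup p w"
  unfolding t_smult_def by (simp add: map.rep_eq when_def)

lemma sum_single_lookup_keys: "(\<Sum>u\<in>Poly_Mapping.keys p. Poly_Mapping.single u (Poly_Mapping.lookup p u)) = p"
proof (rule poly_mapping_eqI)
  fix k
  show "Poly_Mapping.lookup (\<Sum>u\<in>Poly_Mapping.keys p. Poly_Mapping.single u (Poly_Mapping.lookup p u)) k = Poly_Mapping.lookup p k"
    by (simp add: lookup_sum lookup_single when_def in_keys_iff)
qed

lemma sum_keys_superset:
  fixes p :: "'a \<Rightarrow>\<^sub>0 'b::zero" and g :: "'a \<Rightarrow> 'b \<Rightarrow> 'c::comm_monoid_add"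
  assumes "finite K" "Poly_Mapping.keys p \<subseteq> K" "\<And>u. g u 0 = 0"
  shows "(\<Sum>u\<in>Poly_Mapping.keys p. g u (Poly_Mapping.lookup p u)) = (\<Sum>u\<in>K. g u (Poly_Mapping.lookup p u))"
  using assms by (intro sum.mono_neutral_left) (auto simp: in_keys_iff)

lemma fa_mult_superset_keys:
  assumes "finite K" "Poly_Mapping.keys p \<subseteq> K" "finite L" "Poly_Mapping.keys q \<subseteq> L"
  shows "fa_mult p q = (\<Sum>u\<in>K. \<Sum>v\<in>L.
      Poly_Mapping.single (u @ v) (Poly_Mapping.lookup p u * Poly_Mapping.lookup q v))"
proof -
  have "fa_mult p q = (\<Sum>u\<in>K. \<Sum>v\<in>Poly_Mapping.keys q.
      Poly_Mapping.single (u @ v) (Poly_Mapping.lookup p u * Poly_Mapping.lookup q v))"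
    unfolding fa_mult_def
    by (rule sum_keys_superset[where g="\<lambda>u c. \<Sum>v\<in>Poly_Mapping.keys q.
      Poly_Mapping.single (u @ v) (c * Poly_Mapping.lookup q v)"]) (use assms in auto)
  also have "\<dots> = (\<Sum>u\<in>K. \<Sum>v\<in>L.
      Poly_Mapping.single (u @ v) (Poly_Mapping.lookup p u * Poly_Mapping.lookup q v))"
    by (intro sum.cong refl sum_keys_superset[where g="\<lambda>v c. Poly_Mapping.single (_ @ v) (_ * c)"]) (use assms in auto)
  finally show ?thesis .
qed

lemma fa_mult_add_left: "fa_mult (p + p') q = fa_mult p q + fa_mult p' q"
proof -
  let ?K = "Poly_Mapping.keys p \<union> Poly_Mapping.keys p'"
  have k: "Poly_Mapping.keys (p + p') \<subseteq> ?K" by (rule keys_add)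
  show ?thesis
    apply (subst (1 2 3) fa_mult_superset_keys[where K="?K" and L="Poly_Mapping.keys q"])
    using k by (auto simp: lookup_add distrib_right single_add sum.distrib)
qed

lemma fa_mult_add_right: "fa_mult p (q + q') = fa_mult p q + fa_mult p q'"
proof -
  let ?L = "Poly_Mapping.keys q \<union> Poly_Mapping.keys q'"
  have k: "Poly_Mapping.keys (q + q') \<subseteq> ?L" by (rule keys_add)
  show ?thesis
    apply (subst (1 2 3) fa_mult_superset_keys[where L="?L" and K="Poly_Mapping.keys p"])
    using k by (auto simp: lookup_add distrib_left single_add sum.distrib)
qed

lemma fa_mult_zero_left [simp]: "fa_mult 0 q = 0" by (simp add: fa_mult_def)
lemma fa_mult_zero_right [simp]: "fa_mult p 0 = 0" by (simp add: fa_mult_def)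

lemma fa_mult_neg_left: "fa_mult (- p) q = - fa_mult p q"
  using fa_mult_add_left[of "-p" p q] by (simp add: eq_neg_iff_add_eq_0)

lemma fa_mult_sum_left: "fa_mult (\<Sum>i\<in>A. f i) q = (\<Sum>i\<in>A. fa_mult (f i) q)"
  by (induction A rule: infinite_finite_induct) (auto simp: fa_mult_add_left)

lemma fa_mult_sum_right: "fa_mult p (\<Sum>i\<in>A. f i) = (\<Sum>i\<in>A. fa_mult p (f i))"
  by (induction A rule: infinite_finite_induct) (auto simp: fa_mult_add_right)

lemma fa_mult_one_left [simp]: "fa_mult fa_one q = q"
  by (simp add: fa_mult_def fa_one_def sum_single_lookup_keys)

lemma fa_mult_one_right [simp]: "fa_mult q fa_one = q"
  by (simp add: fa_mult_def fa_one_def sum_single_lookup_keys)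

lemma fa_smult_sum: "fa_smult c (\<Sum>i\<in>A. f i) = (\<Sum>i\<in>A. fa_smult c (f i))"
  by (rule poly_mapping_eqI) (simp add: lookup_sum sum_distrib_left)

lemma fa_smult_single: "fa_smult c (Poly_Mapping.single u d) = Poly_Mapping.single u (c * d)"
  by (rule poly_mapping_eqI) (simp add: lookup_single when_def)

lemma fa_mult_smult_left: "fa_mult (fa_smult c p) q = fa_smult c (fa_mult p q)"
proof -
  have k: "Poly_Mapping.keys (fa_smult c p) \<subseteq> Poly_Mapping.keys p"
    by (auto simp: in_keys_iff)
  show ?thesis
    apply (subst (1 2) fa_mult_superset_keys[where K="Poly_Mapping.keys p" and L="Poly_Mapping.keys q"])
    using k by (auto simp: fa_smult_sum fa_smult_single mult.assoc)
qed

lemma fa_smult_add_left: "fa_smult (c + d) p = fa_smult c p + fa_smult d p"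
  by (rule poly_mapping_eqI) (simp add: lookup_add distrib_right)

lemma fa_smult_zero [simp]: "fa_smult 0 p = 0"
  by (rule poly_mapping_eqI) simp

lemma fa_smult_one [simp]: "fa_smult 1 p = p"
  by (rule poly_mapping_eqI) simp

lemma t_smult_one [simp]: "t_smult 1 p = p"
  by (rule poly_mapping_eqI) simp

definition lin_ext :: "('a \<Rightarrow> 'k::field fa) \<Rightarrow> ('a \<Rightarrow>\<^sub>0 'k) \<Rightarrow> 'k fa" where
  "lin_ext g t = (\<Sum>a\<in>Poly_Mapping.keys t. fa_smult (Poly_Mapping.lookup t a) (g a))"

lemma lin_ext_superset_keys: "finite K \<Longrightarrow> Poly_Mapping.keys t \<subseteq> K \<Longrightarrow>
   lin_ext g t = (\<Sum>a\<in>K. fa_smult (Poly_Mapping.lookup t a) (g a))"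
  unfolding lin_ext_def by (rule sum_keys_superset[where g="\<lambda>a c. fa_smult c (g a)"]) auto

lemma lin_ext_add: "lin_ext g (t + t') = lin_ext g t + lin_ext g t'"
proof -
  let ?K = "Poly_Mapping.keys t \<union> Poly_Mapping.keys t'"
  have k: "Poly_Mapping.keys (t + t') \<subseteq> ?K" by (rule keys_add)
  show ?thesis
    apply (subst (1 2 3) lin_ext_superset_keys[where K="?K"])
    using k by (auto simp: lookup_add fa_smult_add_left sum.distrib)
qed

lemma lin_ext_zero [simp]: "lin_ext g 0 = 0" by (simp add: lin_ext_def)

lemma lin_ext_sum: "lin_ext g (\<Sum>i\<in>A. f i) = (\<Sum>i\<in>A. lin_ext g (f i))"
  by (induction A rule: infinite_finite_induct) (auto simp: lin_ext_add)

lemma lin_ext_single [simp]: "lin_ext g (Poly_Mapping.single a c) = fa_smult c (g a)"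
  by (simp add: lin_ext_def)

lemma mult_id_S_lin_ext: "mult_id_S S t =
  lin_ext (\<lambda>a. fa_mult (Poly_Mapping.single (fst a) 1) (S (Poly_Mapping.single (snd a) 1))) t"
  by (simp add: mult_id_S_def lin_ext_def)

lemma tensor_single: "tensor p (Poly_Mapping.single w (1::'k::field)) =
   (\<Sum>u\<in>Poly_Mapping.keys p. Poly_Mapping.single (u, w) (Poly_Mapping.lookup p u))"
  by (simp add: tensor_def)

lemma mult_id_S_tensor: "mult_id_S S (tensor p (Poly_Mapping.single w (1::'k::field))) =
   fa_mult p (S (Poly_Mapping.single w 1))"
proof -
  have "mult_id_S S (tensor p (Poly_Mapping.single w (1::'k::field))) =
     (\<Sum>u\<in>Poly_Mapping.keys p. fa_smult (Poly_Mapping.lookup p u)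
        (fa_mult (Poly_Mapping.single u 1) (S (Poly_Mapping.single w 1))))"
    by (simp add: mult_id_S_lin_ext tensor_single lin_ext_sum)
  also have "\<dots> = (\<Sum>u\<in>Poly_Mapping.keys p.
        fa_mult (Poly_Mapping.single u (Poly_Mapping.lookup p u)) (S (Poly_Mapping.single w 1)))"
    by (simp add: fa_mult_smult_left[symmetric] fa_smult_single)
  also have "\<dots> = fa_mult p (S (Poly_Mapping.single w 1))"
    by (simp add: fa_mult_sum_left[symmetric] sum_single_lookup_keys)
  finally show ?thesis .
qed

section \<open>The top partial Bell polynomial\<close>

lemma lookup_fa_mult_letter0: "Poly_Mapping.lookup (fa_mult (Poly_Mapping.single [0] (1::'k::field)) p) u =
   (case u of [] \<Rightarrow> 0 | a # w \<Rightarrow> if a = 0 then Poly_Mapping.lookup p w else 0)"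
proof -
  have "Poly_Mapping.lookup (fa_mult (Poly_Mapping.single [0] (1::'k::field)) p) u =
     (\<Sum>v\<in>Poly_Mapping.keys p. if 0 # v = u then Poly_Mapping.lookup p v else 0)"
    by (simp add: fa_mult_def lookup_sum lookup_single when_def)
  also have "\<dots> = (case u of [] \<Rightarrow> 0 | a # w \<Rightarrow> if a = 0 then Poly_Mapping.lookup p w else 0)"
  proof (cases u)
    case Nil then show ?thesis by simp
  next
    case (Cons a w)
    show ?thesis
    proof (cases "a = 0")
      case True
      have "(\<Sum>v\<in>Poly_Mapping.keys p. if 0 # v = u then Poly_Mapping.lookup p v else 0) =
        (\<Sum>v\<in>Poly_Mapping.keys p. if v = w then Poly_Mapping.lookup p v else 0)"
        using Cons True by (intro sum.cong) auto
      also have "\<dots> = Poly_Mapping.lookup p w"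
        by (simp add: in_keys_iff)
      finally show ?thesis using Cons True by simp
    qed (use Cons in simp)
  qed
  finally show ?thesis .
qed

lemma lookup_bell_deriv: "Poly_Mapping.lookup (bell_deriv p) u =
  (\<Sum>w\<in>Poly_Mapping.keys p. \<Sum>i<length w. if w[i := Suc (w ! i)] = u then Poly_Mapping.lookup p w else 0)"
  by (simp add: bell_deriv_def lookup_sum lookup_single when_def)

lemma lookup_Bell_length_ge: "length u \<ge> n \<Longrightarrow>
  Poly_Mapping.lookup (Bell n :: 'k::field fa) u = (if u = replicate n 0 then 1 else 0)"
proof (induction n arbitrary: u)
  case 0
  then show ?case by (simp add: fa_one_def lookup_single when_def eq_commute)
next
  case (Suc n)
  \<comment> \<open>\<open>bell_deriv\<close> preserves word length, so it contributes no word this long\<close>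
  have z: "(if w[i := Suc (w ! i)] = u then Poly_Mapping.lookup (Bell n :: 'k fa) w else 0) = 0" for w i
  proof (cases "w[i := Suc (w ! i)] = u")
    case True
    then have "length w = length u" by auto
    then have "length w \<ge> n" "w \<noteq> replicate n 0" using Suc.prems by auto
    then have "Poly_Mapping.lookup (Bell n :: 'k fa) w = 0" using Suc.IH by simp
    then show ?thesis by simp
  qed simp
  have d: "Poly_Mapping.lookup (bell_deriv (Bell n :: 'k fa)) u = 0"
    unfolding lookup_bell_deriv z by simp
  have m: "Poly_Mapping.lookup (fa_mult (Poly_Mapping.single [0] 1) (Bell n :: 'k fa)) u =
      (if u = replicate (Suc n) 0 then 1 else 0)"
  proof (cases u)
    case Nil then show ?thesis using Suc.prems by simp
  next
    case (Cons a w)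
    then have "length w \<ge> n" using Suc.prems by simp
    then show ?thesis using Cons Suc.IH[of w] by (auto simp: lookup_fa_mult_letter0)
  qed
  show ?case by (simp add: lookup_add d m)
qed

lemma Bell_part_diag: "Bell_part (Suc n) (Suc n) = (Poly_Mapping.single (replicate (Suc n) 0) 1 :: 'k::field fa)"
proof -
  have "{u \<in> Poly_Mapping.keys (Bell (Suc n) :: 'k fa). length u = Suc n} = {replicate (Suc n) 0}"
    using lookup_Bell_length_ge[of "Suc n", where 'k='k] by (auto simp: in_keys_iff split: if_splits)
  then show ?thesis
    unfolding Bell_part_def using lookup_Bell_length_ge[of "Suc n" "replicate (Suc n) 0", where 'k='k] by simp
qed

lemma evalX_single: "evalX (Poly_Mapping.single w (1::'k::field)) = Poly_Mapping.single (subst_word w) 1"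
  by (simp add: evalX_def)

lemma evalX_Bell_part_diag: "evalX (Bell_part (Suc n) (Suc n) :: 'k::field fa) = fa_one"
  by (simp add: Bell_part_diag evalX_single subst_word_def fa_one_def)

section \<open>The antipode on generators\<close>

lemma X_eq_single: "X k = Poly_Mapping.single (if k = 0 then [] else [k - 1]) 1"
  by (simp add: X_def fa_one_def)

definition bell_coeff :: "nat \<Rightarrow> nat \<Rightarrow> 'k::field fa" where
  "bell_coeff r k = evalX (Bell_part (r + 1) (k + 1))"

lemma bell_coeff_diag: "bell_coeff r r = fa_one"
  using evalX_Bell_part_diag[of r] by (simp add: bell_coeff_def)

lemma mult_id_S_DeltaX: "mult_id_S S (DeltaX n) = (\<Sum>k\<in>{0..n}. fa_mult (bell_coeff n k) (S (X k)))"
  unfolding DeltaX_def mult_id_S_lin_ext lin_ext_sum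
  by (simp add: X_eq_single bell_coeff_def mult_id_S_tensor[unfolded mult_id_S_lin_ext])

lemma t_mult_unit: "t_mult s (Poly_Mapping.single ([], []) (1::'k::field)) = s"
  by (simp add: t_mult_def sum_single_lookup_keys)

lemma Delta_X: "n \<ge> 1 \<Longrightarrow> Delta (X n :: 'k::field fa) = DeltaX n"
  by (simp add: Delta_def X_def t_mult_unit)

lemma Delta_one: "Delta (fa_one :: 'k::field fa) = Poly_Mapping.single ([], []) 1"
  by (simp add: Delta_def fa_one_def)

lemma counit_X: "n \<ge> 1 \<Longrightarrow> counit (X n) = 0"
  by (simp add: counit_def X_def lookup_single)

lemma counit_one: "counit fa_one = 1"
  by (simp add: counit_def fa_one_def)

lemma antipode_one: assumes "is_antipode S" shows "S fa_one = fa_one"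
proof -
  have "mult_id_S S (Delta fa_one) = fa_smult (counit fa_one) fa_one"
    using assms unfolding is_antipode_def by blast
  then show ?thesis
    by (simp add: Delta_one counit_one mult_id_S_lin_ext fa_one_def[symmetric])
qed

lemma antipode_X_recursion:
  assumes S: "is_antipode S" and r: "r \<ge> 1"
  shows "S (X r) = - (bell_coeff r 0 + (\<Sum>k\<in>{1..<r}. fa_mult (bell_coeff r k) (S (X k))))"
proof -
  have "mult_id_S S (Delta (X r)) = fa_smult (counit (X r)) fa_one"
    using S unfolding is_antipode_def by blast
  then have sum0: "(\<Sum>k\<in>{0..r}. fa_mult (bell_coeff r k) (S (X k))) = 0"
    using r by (simp add: Delta_X counit_X mult_id_S_DeltaX)
  have "{0..r} = insert r (insert 0 {1..<r})" using r by auto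
  then have "(\<Sum>k\<in>{0..r}. fa_mult (bell_coeff r k) (S (X k))) =
      S (X r) + (bell_coeff r 0 + (\<Sum>k\<in>{1..<r}. fa_mult (bell_coeff r k) (S (X k))))"
    using r antipode_one[OF S] by (simp add: bell_coeff_diag X_def)
  with sum0 show ?thesis by (simp only: eq_neg_iff_add_eq_0)
qed

section \<open>Chain sums of almost upper triangular matrices\<close>

lemma sorted_list_of_set_insert_min: "J \<subseteq> {Suc l..<n} \<Longrightarrow>
   sorted_list_of_set (insert l J) = l # sorted_list_of_set J"
proof -
  assume J: "J \<subseteq> {Suc l..<n}"
  then have f: "finite J" by (rule finite_subset) simp
  have "l \<notin> J" using J by auto
  then have "sorted_list_of_set (insert l J) = insort l (sorted_list_of_set J)"
    using f by (simp add: sorted_list_of_set_insert_remove)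
  also have "\<dots> = l # sorted_list_of_set J"
    using J f by (intro insort_is_Cons) auto
  finally show ?thesis .
qed

definition chain_sum :: "nat \<Rightarrow> (nat \<Rightarrow> nat \<Rightarrow> 'k::field fa) \<Rightarrow> nat \<Rightarrow> nat \<Rightarrow> 'k fa" where
  "chain_sum n a m l = (\<Sum>J\<in>Pow {l..<n}. chain_prod a (m # sorted_list_of_set J @ [n]))"

lemma chain_sum_empty: "chain_sum n a m n = a (m + 1) n"
  by (simp add: chain_sum_def)

lemma chain_sum_split_first: assumes "l < n"
  shows "chain_sum n a m l = chain_sum n a m (Suc l) + fa_mult (a (m + 1) l) (chain_sum n a l (Suc l))"
proof -
  let ?A = "{Suc l..<n}"
  have iv: "{l..<n} = insert l ?A" using assms by auto
  have nl: "l \<notin> ?A" by simp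
  have P: "Pow {l..<n} = Pow ?A \<union> insert l ` Pow ?A" unfolding iv by (rule Pow_insert)
  have disj: "Pow ?A \<inter> insert l ` Pow ?A = {}" using nl by auto
  have inj: "inj_on (insert l) (Pow ?A)"
    unfolding inj_on_def by (metis Diff_insert_absorb PowD atLeastLessThan_iff lessI not_less subsetD)
  let ?f = "\<lambda>J. chain_prod a (m # sorted_list_of_set J @ [n])"
  have "chain_sum n a m l = sum ?f (Pow ?A) + sum ?f (insert l ` Pow ?A)"
    unfolding chain_sum_def P by (rule sum.union_disjoint) (use disj in auto)
  also have "sum ?f (insert l ` Pow ?A) = sum (?f \<circ> insert l) (Pow ?A)"
    by (rule sum.reindex[OF inj])
  also have "\<dots> = (\<Sum>J\<in>Pow ?A. fa_mult (a (m + 1) l) (chain_prod a (l # sorted_list_of_set J @ [n])))"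
    by (intro sum.cong refl) (simp add: sorted_list_of_set_insert_min)
  also have "\<dots> = fa_mult (a (m + 1) l) (chain_sum n a l (Suc l))"
    by (simp add: chain_sum_def fa_mult_sum_right)
  finally show ?thesis by (simp add: chain_sum_def)
qed

lemma chain_sum_expand: assumes "l \<le> n"
  shows "chain_sum n a m l = a (m + 1) n + (\<Sum>j\<in>{l..<n}. fa_mult (a (m + 1) j) (chain_sum n a j (Suc j)))"
  using assms
proof (induction l rule: inc_induct)
  case base
  then show ?case by (simp add: chain_sum_empty)
next
  case (step l)
  have iv: "{l..<n} = insert l {Suc l..<n}" using step.hyps by auto
  show ?case
    using step by (simp add: chain_sum_split_first iv add_ac)
qed

lemma qdet_hess_eq_chain_sum: "qdet_hess n a = chain_sum n a 0 1"
  by (simp add: qdet_hess_def chain_sum_def)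

lemma chain_sum_neg_A_mat:
  fixes S :: "'k::field fa \<Rightarrow> 'k fa"
  assumes S: "is_antipode S" and r: "1 \<le> r" "r \<le> n"
  shows "chain_sum n (\<lambda>i j. - A_mat n i j) (n - r) (Suc (n - r)) = S (X r)"
  using r
proof (induction r rule: less_induct)
  case (less r)
  let ?a = "\<lambda>i j. - (A_mat n i j :: 'k fa)"
  have row: "A_mat n (Suc (n - r)) j = bell_coeff r (n - j)" for j
    using less.prems by (simp add: A_mat_def bell_coeff_def)
  have "chain_sum n ?a (n - r) (Suc (n - r)) =
     ?a (n - r + 1) n + (\<Sum>j\<in>{Suc (n - r)..<n}. fa_mult (?a (n - r + 1) j) (chain_sum n ?a j (Suc j)))"
    using less.prems by (intro chain_sum_expand) auto
  also have "(\<Sum>j\<in>{Suc (n - r)..<n}. fa_mult (?a (n - r + 1) j) (chain_sum n ?a j (Suc j)))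
      = (\<Sum>k\<in>{1..<r}. fa_mult (?a (n - r + 1) (n - k)) (chain_sum n ?a (n - k) (Suc (n - k))))"
    using less.prems
    by (intro sum.reindex_bij_witness[where i="\<lambda>j. n - j" and j="\<lambda>k. n - k"]) auto
  also have "\<dots> = (\<Sum>k\<in>{1..<r}. - fa_mult (bell_coeff r k) (S (X k)))"
  proof (intro sum.cong refl)
    fix k assume k: "k \<in> {1..<r}"
    then have "chain_sum n ?a (n - k) (Suc (n - k)) = S (X k)"
      using less.IH[of k] less.prems by auto
    moreover have "n - (n - k) = k" using k less.prems by auto
    ultimately show "fa_mult (?a (n - r + 1) (n - k)) (chain_sum n ?a (n - k) (Suc (n - k))) =
        - fa_mult (bell_coeff r k) (S (X k))"
      by (simp add: row fa_mult_neg_left)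
  qed
  also have "?a (n - r + 1) n = - bell_coeff r 0" using row[of n] by simp
  finally show ?case
    using antipode_X_recursion[OF S less.prems(1)] by (simp only: sum_negf minus_add add.commute)
qed

theorem mainTheorem3:
  fixes S :: "'k::field fa \<Rightarrow> 'k fa" and n :: nat
  assumes "is_antipode S" and "n \<ge> 1"
  shows "S (X n) = - qdet_top_right n (A_mat n)"
proof -
  have "chain_sum n (\<lambda>i j. - A_mat n i j) 0 1 = S (X n)"
    using chain_sum_neg_A_mat[OF assms(1) assms(2) order_refl] by simp
  then show ?thesis by (simp add: qdet_top_right_def qdet_hess_eq_chain_sum)
qed

end
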